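(* Let $G$ be a finite, simple, connected graph with at least $2$ vertices. Then $2 \le \mathrm{mob}(G) \le \mathrm{gp}(G)$. Moreover, for any integers $2 \le a \le b$ there exists a (finite, simple, connected) graph $G$ with $\mathrm{mob}(G) = a$ and $\mathrm{gp}(G) = b$.
   Context: All graphs are finite, simple and connected. A set $S$ of vertices of $G$ is a general position set if no three distinct vertices of $S$ lie on a common shortest path of $G$; $\mathrm{gp}(G)$ is the maximum size of a general position set. Mobile general position sets: place one robot on each vertex of a general position set $S$. Robots move one at a time; a move is legal if a robot moves from its vertex to an adjacent unoccupied vertex and the new set of occupied vertices is again a general position set. $S$ is a mobile general position set if there is a finite sequence of legal moves such that every vertex of $G$ is occupied by some robot at some moment (including the initial configuration). $\mathrm{mob}(G)$ is the maximum cardinality of a mobile general position set of $G$. *)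

theory Defs
  imports Main
begin

definition simple_graph :: "'a set \<Rightarrow> ('a \<Rightarrow> 'a \<Rightarrow> bool) \<Rightarrow> bool" where
  "simple_graph V E \<longleftrightarrow> finite V \<and> V \<noteq> {} \<and>
     (\<forall>x y. E x y \<longrightarrow> x \<in> V \<and> y \<in> V) \<and>
     (\<forall>x y. E x y \<longrightarrow> E y x) \<and> (\<forall>x. \<not> E x x)"

definition walk :: "'a set \<Rightarrow> ('a \<Rightarrow> 'a \<Rightarrow> bool) \<Rightarrow> 'a list \<Rightarrow> bool" where
  "walk V E xs \<longleftrightarrow> xs \<noteq> [] \<and> set xs \<subseteq> V \<and>
     (\<forall>i. Suc i < length xs \<longrightarrow> E (xs ! i) (xs ! Suc i))"

definition connected_graph :: "'a set \<Rightarrow> ('a \<Rightarrow> 'a \<Rightarrow> bool) \<Rightarrow> bool" where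
  "connected_graph V E \<longleftrightarrow>
     (\<forall>u\<in>V. \<forall>v\<in>V. \<exists>xs. walk V E xs \<and> hd xs = u \<and> last xs = v)"

definition dist :: "'a set \<Rightarrow> ('a \<Rightarrow> 'a \<Rightarrow> bool) \<Rightarrow> 'a \<Rightarrow> 'a \<Rightarrow> nat" where
  "dist V E u v = (LEAST n. \<exists>xs. walk V E xs \<and> hd xs = u \<and> last xs = v \<and> length xs = Suc n)"

text \<open>A shortest path: a walk whose number of edges equals the distance of its ends
  (such a walk is automatically a path, i.e. has no repeated vertices).\<close>
definition shortest_path :: "'a set \<Rightarrow> ('a \<Rightarrow> 'a \<Rightarrow> bool) \<Rightarrow> 'a list \<Rightarrow> bool" where
  "shortest_path V E xs \<longleftrightarrow> walk V E xs \<and> length xs = Suc (dist V E (hd xs) (last xs))"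

definition gp_set :: "'a set \<Rightarrow> ('a \<Rightarrow> 'a \<Rightarrow> bool) \<Rightarrow> 'a set \<Rightarrow> bool" where
  "gp_set V E S \<longleftrightarrow> S \<subseteq> V \<and>
     (\<forall>x\<in>S. \<forall>y\<in>S. \<forall>z\<in>S. x \<noteq> y \<and> x \<noteq> z \<and> y \<noteq> z \<longrightarrow>
        \<not> (\<exists>P. shortest_path V E P \<and> x \<in> set P \<and> y \<in> set P \<and> z \<in> set P))"

definition gp :: "'a set \<Rightarrow> ('a \<Rightarrow> 'a \<Rightarrow> bool) \<Rightarrow> nat" where
  "gp V E = Max {card S | S. gp_set V E S}"

definition legal_move :: "'a set \<Rightarrow> ('a \<Rightarrow> 'a \<Rightarrow> bool) \<Rightarrow> 'a set \<Rightarrow> 'a set \<Rightarrow> bool" where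
  "legal_move V E C C' \<longleftrightarrow> (\<exists>u v. u \<in> C \<and> v \<in> V \<and> v \<notin> C \<and> E u v \<and>
       C' = insert v (C - {u}) \<and> gp_set V E C')"

definition mobile_gp_set :: "'a set \<Rightarrow> ('a \<Rightarrow> 'a \<Rightarrow> bool) \<Rightarrow> 'a set \<Rightarrow> bool" where
  "mobile_gp_set V E S \<longleftrightarrow> gp_set V E S \<and>
     (\<exists>cs. cs \<noteq> [] \<and> hd cs = S \<and>
        (\<forall>i. Suc i < length cs \<longrightarrow> legal_move V E (cs ! i) (cs ! Suc i)) \<and>
        V \<subseteq> \<Union> (set cs))"

definition mob :: "'a set \<Rightarrow> ('a \<Rightarrow> 'a \<Rightarrow> bool) \<Rightarrow> nat" where
  "mob V E = Max {card S | S. mobile_gp_set V E S}"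

end

theory Submission
  imports Defs
begin

text \<open>Any two vertices are in general position, so two robots can follow a walk from one
  vertex to any other: one robot advances along the walk, and when the next vertex is
  occupied by the other robot, the two simply exchange roles. Legal moves between general
  position sets are reversible, hence all configurations reachable from a pair can be
  threaded into a single move sequence visiting every vertex; thus mob is at least 2, and
  it is at most gp because mobile sets are general position sets.

  For the examples take the clique K_a with b - a + 1 pendant vertices attached to one
  clique vertex, the hub. This graph has diameter 2, so a set is in general position iff
  it induces no path on three vertices. All b vertices other than the hub form a general
  position set, while one containing the hub has at most a vertices. As every vertex,
  in particular the hub, must be occupied at some moment, mob is at most a; conversely
  K_a is mobile, since its robot on the hub can visit each leaf and come back.\<close>

lemma walk_iff_successively:
  "walk V E xs \<longleftrightarrow> xs \<noteq> [] \<and> set xs \<subseteq> V \<and> successively E xs"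
  by (auto simp: walk_def successively_conv_nth)

lemma mobile_gp_set_iff_successively:
  "mobile_gp_set V E S \<longleftrightarrow> gp_set V E S \<and>
     (\<exists>cs. cs \<noteq> [] \<and> hd cs = S \<and> successively (legal_move V E) cs \<and> V \<subseteq> \<Union> (set cs))"
  by (simp add: mobile_gp_set_def successively_conv_nth)

lemma successively_extend_rtranclp:
  assumes "R\<^sup>*\<^sup>* (last cs) y" and "cs \<noteq> []" and "successively R cs"
  shows "\<exists>cs'. cs' \<noteq> [] \<and> hd cs' = hd cs \<and> last cs' = y \<and> set cs \<subseteq> set cs' \<and> successively R cs'"
  using assms(1)
proof (induction rule: rtranclp_induct)
  case base
  then show ?case using assms(2,3) by blast
next
  case (step y z)
  then obtain cs' where cs': "cs' \<noteq> []" "hd cs' = hd cs" "last cs' = y" "set cs \<subseteq> set cs'"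
    "successively R cs'" by blast
  then show ?case
    by (intro exI[of _ "cs' @ [z]"]) (auto simp: successively_append_iff step.hyps(2))
qed

lemma successively_covering_chain:
  assumes "symp R" and "finite W" and "\<And>w. w \<in> W \<Longrightarrow> \<exists>C. R\<^sup>*\<^sup>* S C \<and> w \<in> C"
  shows "\<exists>cs. cs \<noteq> [] \<and> hd cs = S \<and> successively R cs \<and> W \<subseteq> \<Union> (set cs)"
proof -
  have "\<exists>cs. cs \<noteq> [] \<and> hd cs = S \<and> last cs = S \<and> successively R cs \<and> W \<subseteq> \<Union> (set cs)"
    using assms(2,3)
  proof (induction W rule: finite_induct)
    case empty
    show ?case by (intro exI[of _ "[S]"]) auto
  next
    case (insert w W)
    then obtain cs where cs: "cs \<noteq> []" "hd cs = S" "last cs = S" "successively R cs"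
      "W \<subseteq> \<Union> (set cs)" by auto
    obtain C where C: "R\<^sup>*\<^sup>* S C" "w \<in> C" using insert.prems by blast
    obtain cs' where cs': "cs' \<noteq> []" "hd cs' = S" "last cs' = C" "set cs \<subseteq> set cs'"
      "successively R cs'"
      using successively_extend_rtranclp[of R cs C] C(1) cs by auto
    have "R\<^sup>*\<^sup>* C S" using C(1) symp_rtranclp[OF assms(1)] by (blast dest: sympD)
    then obtain cs'' where "cs'' \<noteq> []" "hd cs'' = S" "last cs'' = S" "set cs' \<subseteq> set cs''"
      "successively R cs''"
      using successively_extend_rtranclp[of R cs' S] cs' by auto
    moreover have "C \<in> set cs'" using cs'(1,3) by auto
    ultimately show ?case using cs(5) cs'(4) C(2) by (intro exI[of _ cs'']) blast
  qed
  then show ?thesis by blast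
qed

lemma successively_invariant:
  assumes "successively R cs" and "P (hd cs)" and "x \<in> set cs"
    and step: "\<And>y z. R y z \<Longrightarrow> P y \<Longrightarrow> P z"
  shows "P x"
  using assms(1-3) by (induction cs rule: induct_list012) (auto intro: step)

lemma finite_cards_of_subsets:
  assumes "finite V" and "\<And>S. P S \<Longrightarrow> S \<subseteq> V"
  shows "finite {card S | S. P S}"
proof (rule finite_subset[of _ "{..card V}"])
  show "{card S | S. P S} \<subseteq> {..card V}"
    using assms card_mono by fastforce
qed simp

lemma Max_cards_eqI:
  assumes "\<And>S. P S \<Longrightarrow> card S \<le> n" and "P S\<^sub>0" and "card S\<^sub>0 = n"
  shows "Max {card S | S. P S} = n"
proof (rule Max_eqI)
  show "finite {card S | S. P S}"
    by (rule finite_subset[of _ "{..n}"]) (use assms(1) in auto)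
qed (use assms in auto)

section \<open>Mobile general position sets\<close>

lemma simple_graph_edgeD:
  "simple_graph V E \<Longrightarrow> E x y \<Longrightarrow> x \<in> V \<and> y \<in> V \<and> E y x \<and> x \<noteq> y"
  unfolding simple_graph_def by metis

lemma gp_set_pair: "x \<in> V \<Longrightarrow> y \<in> V \<Longrightarrow> gp_set V E {x, y}"
  unfolding gp_set_def by auto

lemma legal_move_card: "legal_move V E C C' \<Longrightarrow> finite C \<Longrightarrow> card C' = card C"
  unfolding legal_move_def using card.remove by fastforce

text \<open>A legal move out of a general position set can be undone by a legal move, so
  restricting to such moves gives a symmetric relation.\<close>
definition gp_move :: "'a set \<Rightarrow> ('a \<Rightarrow> 'a \<Rightarrow> bool) \<Rightarrow> 'a set \<Rightarrow> 'a set \<Rightarrow> bool" where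
  "gp_move V E C C' \<longleftrightarrow> gp_set V E C \<and> legal_move V E C C'"

lemma symp_gp_move:
  assumes "simple_graph V E"
  shows "symp (gp_move V E)"
proof (rule sympI)
  fix C C' assume "gp_move V E C C'"
  then obtain u v where uv: "u \<in> C" "v \<in> V" "v \<notin> C" "E u v" "C' = insert v (C - {u})"
    and gp: "gp_set V E C" "gp_set V E C'"
    unfolding gp_move_def legal_move_def by blast
  have "u \<in> V" "E v u" "u \<noteq> v" using simple_graph_edgeD[OF assms uv(4)] by auto
  moreover have "C = insert u (C' - {v})" using uv \<open>u \<noteq> v\<close> by auto
  ultimately show "gp_move V E C' C"
    unfolding gp_move_def legal_move_def using uv gp by blast
qed

lemma gp_move_pair:
  assumes "simple_graph V E" and "E x y" and "q \<in> V" and "q \<noteq> x" and "q \<noteq> y"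
  shows "gp_move V E {x, q} {y, q}"
proof -
  have "x \<in> V" "y \<in> V" "x \<noteq> y" using simple_graph_edgeD[OF assms(1,2)] by auto
  then have "legal_move V E {x, q} {y, q}"
    unfolding legal_move_def using assms(2-5) gp_set_pair[of y V q E]
    by (intro exI[of _ x] exI[of _ y]) auto
  then show ?thesis
    unfolding gp_move_def using gp_set_pair[of x V q E] \<open>x \<in> V\<close> assms(3) by simp
qed

lemma pair_follows_walk:
  assumes "simple_graph V E" and "walk V E xs" and "q \<in> V" and "q \<noteq> hd xs"
  shows "\<exists>q'. q' \<in> V \<and> q' \<noteq> last xs \<and> (gp_move V E)\<^sup>*\<^sup>* {hd xs, q} {last xs, q'}"
  using assms(2-4)
proof (induction xs arbitrary: q rule: induct_list012)
  case (3 x y zs)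
  have xy: "E x y" "x \<in> V" "x \<noteq> y" and walk: "walk V E (y # zs)"
    using "3.prems"(1) simple_graph_edgeD[OF assms(1)] by (auto simp: walk_iff_successively)
  show ?case
  proof (cases "q = y")
    case True
    \<comment> \<open>the second robot already sits on the next vertex: the robots swap roles\<close>
    obtain q' where "q' \<in> V" "q' \<noteq> last (y # zs)" "(gp_move V E)\<^sup>*\<^sup>* {y, x} {last (y # zs), q'}"
      using "3.IH"(2)[OF walk xy(2)] xy(3) by auto
    moreover have "{x, q} = {y, x}" using True by auto
    ultimately show ?thesis by (intro exI[of _ q']) simp
  next
    case False
    obtain q' where "q' \<in> V" "q' \<noteq> last (y # zs)" "(gp_move V E)\<^sup>*\<^sup>* {y, q} {last (y # zs), q'}"
      using "3.IH"(2)[OF walk "3.prems"(2)] False by auto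
    moreover have "gp_move V E {x, q} {y, q}"
      using gp_move_pair[OF assms(1) xy(1) "3.prems"(2)] "3.prems"(3) False by simp
    ultimately show ?thesis
      by (intro exI[of _ q']) (simp add: converse_rtranclp_into_rtranclp)
  qed
qed (auto simp: walk_iff_successively)

lemma mobile_gp_set_if_reachable:
  assumes "simple_graph V E" and "gp_set V E S"
    and "\<And>w. w \<in> V \<Longrightarrow> \<exists>C. (gp_move V E)\<^sup>*\<^sup>* S C \<and> w \<in> C"
  shows "mobile_gp_set V E S"
proof -
  have "finite V" using assms(1) by (simp add: simple_graph_def)
  then obtain cs where "cs \<noteq> []" "hd cs = S" "successively (gp_move V E) cs" "V \<subseteq> \<Union> (set cs)"
    using successively_covering_chain[OF symp_gp_move[OF assms(1)]] assms(3) by metis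
  moreover have "successively (legal_move V E) cs"
    using \<open>successively (gp_move V E) cs\<close> by (rule successively_mono) (simp add: gp_move_def)
  ultimately show ?thesis
    unfolding mobile_gp_set_iff_successively using assms(2) by blast
qed

lemma mobile_gp_set_covers:
  assumes "finite V" and "mobile_gp_set V E S" and "v \<in> V"
  shows "\<exists>C. gp_set V E C \<and> card C = card S \<and> v \<in> C"
proof -
  obtain cs where cs: "hd cs = S" "successively (legal_move V E) cs" "V \<subseteq> \<Union> (set cs)"
    and gp: "gp_set V E S"
    using assms(2) unfolding mobile_gp_set_iff_successively by blast
  obtain C where "C \<in> set cs" "v \<in> C" using cs(3) assms(3) by blast
  moreover have "gp_set V E C \<and> card C = card S"
  proof (rule successively_invariant[OF cs(2), where P = "\<lambda>C. gp_set V E C \<and> card C = card S"])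
    show "gp_set V E (hd cs) \<and> card (hd cs) = card S" using cs(1) gp by simp
  next
    fix D D' assume move: "legal_move V E D D'" and D: "gp_set V E D \<and> card D = card S"
    have "finite D" using D assms(1) finite_subset by (auto simp: gp_set_def)
    then have "card D' = card S" using legal_move_card[OF move] D by simp
    moreover have "gp_set V E D'" using move unfolding legal_move_def by blast
    ultimately show "gp_set V E D' \<and> card D' = card S" by simp
  qed fact
  ultimately show ?thesis by blast
qed

lemma mobile_gp_set_pair:
  assumes "simple_graph V E" and "connected_graph V E"
    and "s \<in> V" and "t \<in> V" and "s \<noteq> t"
  shows "mobile_gp_set V E {s, t}"
proof (rule mobile_gp_set_if_reachable[OF assms(1) gp_set_pair[OF assms(3,4)]])
  fix w assume "w \<in> V"
  then obtain xs where "walk V E xs" "hd xs = s" "last xs = w"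
    using assms(2,3) unfolding connected_graph_def by blast
  then show "\<exists>C. (gp_move V E)\<^sup>*\<^sup>* {s, t} C \<and> w \<in> C"
    using pair_follows_walk[OF assms(1), of xs t] assms(4,5) by auto
qed

lemma two_le_mob_le_gp:
  assumes "simple_graph V E" and "connected_graph V E" and "card V \<ge> 2"
  shows "2 \<le> mob V E \<and> mob V E \<le> gp V E"
proof -
  have "finite V" using assms(1) by (simp add: simple_graph_def)
  obtain s t where st: "s \<in> V" "t \<in> V" "s \<noteq> t"
    using assms(3) card_le_Suc0_iff_eq[OF \<open>finite V\<close>] by auto
  have two_mobile: "2 \<in> {card S | S. mobile_gp_set V E S}"
    using mobile_gp_set_pair[OF assms(1,2) st] st(3) by force
  have fin_gp: "finite {card S | S. gp_set V E S}"
    by (rule finite_cards_of_subsets[OF \<open>finite V\<close>]) (simp add: gp_set_def)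
  have fin_mob: "finite {card S | S. mobile_gp_set V E S}"
    by (rule finite_cards_of_subsets[OF \<open>finite V\<close>]) (simp add: mobile_gp_set_def gp_set_def)
  have "{card S | S. mobile_gp_set V E S} \<subseteq> {card S | S. gp_set V E S}"
    unfolding mobile_gp_set_def by blast
  then have "mob V E \<le> gp V E"
    unfolding mob_def gp_def using Max_mono two_mobile fin_gp by blast
  moreover have "2 \<le> mob V E"
    unfolding mob_def using Max_ge[OF fin_mob two_mobile] .
  ultimately show ?thesis by simp
qed

section \<open>Graphs of diameter two\<close>

lemma dist_less_length_walk:
  assumes "walk V E xs"
  shows "dist V E (hd xs) (last xs) < length xs"
proof -
  have "xs \<noteq> []" using assms by (simp add: walk_def)
  have "dist V E (hd xs) (last xs) \<le> length xs - 1"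
    unfolding dist_def
    by (rule Least_le, rule exI[of _ xs]) (use assms \<open>xs \<noteq> []\<close> in simp)
  then show ?thesis using \<open>xs \<noteq> []\<close> by (cases xs) auto
qed

lemma shortest_path_exists:
  assumes "walk V E xs"
  shows "\<exists>ys. shortest_path V E ys \<and> hd ys = hd xs \<and> last ys = last xs"
proof -
  have "xs \<noteq> []" using assms by (simp add: walk_def)
  have "\<exists>ys. walk V E ys \<and> hd ys = hd xs \<and> last ys = last xs \<and>
      length ys = Suc (dist V E (hd xs) (last xs))"
    unfolding dist_def
    by (rule LeastI_ex, rule exI[of _ "length xs - 1"], rule exI[of _ xs])
      (use assms \<open>xs \<noteq> []\<close> in simp)
  then show ?thesis unfolding shortest_path_def by auto
qed

lemma three_le_length_walk:
  "walk V E xs \<Longrightarrow> hd xs \<noteq> last xs \<Longrightarrow> \<not> E (hd xs) (last xs) \<Longrightarrow> 3 \<le> length xs"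
  by (cases xs rule: remdups_adj.cases) (auto simp: walk_iff_successively Suc_le_eq split: if_splits)

lemma induced_P3_shortest_path:
  assumes "simple_graph V E" and "E x y" and "E y z" and "x \<noteq> z" and "\<not> E x z"
  shows "shortest_path V E [x, y, z]"
proof -
  have walk: "walk V E [x, y, z]"
    using assms(2,3) simple_graph_edgeD[OF assms(1)] by (auto simp: walk_iff_successively)
  obtain ys where "shortest_path V E ys" "hd ys = x" "last ys = z"
    using shortest_path_exists[OF walk] by auto
  then have "2 \<le> dist V E x z"
    using three_le_length_walk[of V E ys] assms(4,5) by (auto simp: shortest_path_def)
  moreover have "dist V E x z < 3" using dist_less_length_walk[OF walk] by simp
  ultimately show ?thesis using walk by (simp add: shortest_path_def)
qed

lemma gp_set_no_induced_P3:
  assumes "simple_graph V E" and "gp_set V E S" and "x \<in> S" "y \<in> S" "z \<in> S"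
    and "E x y" and "E y z" and "x \<noteq> z"
  shows "E x z"
proof (rule ccontr)
  assume "\<not> E x z"
  have "x \<noteq> y" "y \<noteq> z" using simple_graph_edgeD[OF assms(1)] assms(6,7) by auto
  then have "\<not> (\<exists>P. shortest_path V E P \<and> x \<in> set P \<and> y \<in> set P \<and> z \<in> set P)"
    using assms(2-5,8) unfolding gp_set_def by blast
  moreover have "shortest_path V E [x, y, z]"
    using induced_P3_shortest_path[OF assms(1,6,7,8) \<open>\<not> E x z\<close>] .
  moreover have "x \<in> set [x, y, z]" "y \<in> set [x, y, z]" "z \<in> set [x, y, z]" by simp_all
  ultimately show False by blast
qed

lemma shortest_path_diameter_2:
  assumes diam: "\<forall>u\<in>V. \<forall>v\<in>V. dist V E u v \<le> 2" and sp: "shortest_path V E P"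
    and "3 \<le> length P"
  obtains p0 p1 p2 where "P = [p0, p1, p2]" "E p0 p1" "E p1 p2" "p0 \<noteq> p2" "\<not> E p0 p2"
proof -
  have walk: "walk V E P" and len: "length P = Suc (dist V E (hd P) (last P))"
    using sp by (auto simp: shortest_path_def)
  have "hd P \<in> V" "last P \<in> V" using walk by (auto simp: walk_def)
  then have "length P = 3" using len diam assms(3) by fastforce
  then obtain p0 p1 p2 where P: "P = [p0, p1, p2]"
    by (auto simp: numeral_3_eq_3 length_Suc_conv)
  have "E p0 p1" "E p1 p2" using walk P by (auto simp: walk_iff_successively)
  moreover have "dist V E p0 p2 = 2" using len P by simp
  then have "p0 \<noteq> p2" "\<not> E p0 p2"
    using dist_less_length_walk[of V E "[p0]"] dist_less_length_walk[of V E "[p0, p2]"] walk P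
    by (auto simp: walk_iff_successively)
  ultimately show thesis using P that by blast
qed

lemma gp_set_iff_no_induced_P3:
  assumes "simple_graph V E" and "\<forall>u\<in>V. \<forall>v\<in>V. dist V E u v \<le> 2"
  shows "gp_set V E S \<longleftrightarrow> S \<subseteq> V \<and> (\<forall>x\<in>S. \<forall>y\<in>S. \<forall>z\<in>S. E x y \<and> E y z \<and> x \<noteq> z \<longrightarrow> E x z)"
proof
  assume gp: "gp_set V E S"
  then have "S \<subseteq> V" by (simp add: gp_set_def)
  then show "S \<subseteq> V \<and> (\<forall>x\<in>S. \<forall>y\<in>S. \<forall>z\<in>S. E x y \<and> E y z \<and> x \<noteq> z \<longrightarrow> E x z)"
    using gp_set_no_induced_P3[OF assms(1) gp] by blast
next
  assume S: "S \<subseteq> V \<and> (\<forall>x\<in>S. \<forall>y\<in>S. \<forall>z\<in>S. E x y \<and> E y z \<and> x \<noteq> z \<longrightarrow> E x z)"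
  show "gp_set V E S"
    unfolding gp_set_def
  proof (intro conjI ballI impI notI)
    fix x y z assume xyz: "x \<in> S" "y \<in> S" "z \<in> S" "x \<noteq> y \<and> x \<noteq> z \<and> y \<noteq> z"
      and "\<exists>P. shortest_path V E P \<and> x \<in> set P \<and> y \<in> set P \<and> z \<in> set P"
    then obtain P where P: "shortest_path V E P" "{x, y, z} \<subseteq> set P"
      by blast
    have "card {x, y, z} = 3" using xyz(4) by simp
    then have "3 \<le> length P"
      using card_mono[OF _ P(2)] card_length[of P] by simp
    then obtain p0 p1 p2 where p: "P = [p0, p1, p2]" "E p0 p1" "E p1 p2" "p0 \<noteq> p2" "\<not> E p0 p2"
      by (rule shortest_path_diameter_2[OF assms(2) P(1)])
    have "set P = {x, y, z}"
      using card_seteq[OF _ P(2)] card_length[of P] p(1) \<open>card {x, y, z} = 3\<close> by simp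
    then have "p0 \<in> S" "p1 \<in> S" "p2 \<in> S" using xyz(1-3) p(1) by auto
    then show False using S p(2-5) by blast
  qed (use S in blast)
qed

lemma universal_vertex_walk:
  assumes "simple_graph V E" and "c \<in> V" and "\<And>v. v \<in> V \<Longrightarrow> v \<noteq> c \<Longrightarrow> E c v"
    and "u \<in> V" and "v \<in> V"
  shows "\<exists>xs. walk V E xs \<and> hd xs = u \<and> last xs = v \<and> length xs \<le> 3"
proof -
  have E_sym: "E w c" if "w \<in> V" "w \<noteq> c" for w
    using assms(3)[OF that] simple_graph_edgeD[OF assms(1)] by blast
  consider "u = c" "v = c" | "u = c" "v \<noteq> c" | "u \<noteq> c" "v = c" | "u \<noteq> c" "v \<noteq> c" by blast
  then show ?thesis
  proof cases
    case 1 then show ?thesis using assms(2) by (intro exI[of _ "[c]"]) (simp add: walk_def)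
  next
    case 2 then show ?thesis using assms(2,3,5)
      by (intro exI[of _ "[c, v]"]) (simp add: walk_iff_successively)
  next
    case 3 then show ?thesis using assms(2,4) E_sym
      by (intro exI[of _ "[u, c]"]) (simp add: walk_iff_successively)
  next
    case 4 then show ?thesis using assms(2-5) E_sym
      by (intro exI[of _ "[u, c, v]"]) (simp add: walk_iff_successively)
  qed
qed

lemma universal_vertex_connected:
  assumes "simple_graph V E" and "c \<in> V" and "\<And>v. v \<in> V \<Longrightarrow> v \<noteq> c \<Longrightarrow> E c v"
  shows "connected_graph V E"
  unfolding connected_graph_def using universal_vertex_walk[OF assms] by blast

lemma universal_vertex_diameter_2:
  assumes "simple_graph V E" and "c \<in> V" and "\<And>v. v \<in> V \<Longrightarrow> v \<noteq> c \<Longrightarrow> E c v"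
  shows "\<forall>u\<in>V. \<forall>v\<in>V. dist V E u v \<le> 2"
proof (intro ballI)
  fix u v assume "u \<in> V" "v \<in> V"
  then obtain xs where "walk V E xs" "hd xs = u" "last xs = v" "length xs \<le> 3"
    using universal_vertex_walk[OF assms] by blast
  then show "dist V E u v \<le> 2" using dist_less_length_walk[of V E xs] by simp
qed

section \<open>A clique with pendant vertices\<close>

text \<open>On \<open>{0..b}\<close>: the vertices below \<open>a\<close> form a clique, and each vertex of \<open>{a..b}\<close>
  is a leaf attached to the vertex \<open>0\<close>.\<close>
definition clique_with_pendants :: "nat \<Rightarrow> nat \<Rightarrow> nat \<Rightarrow> nat \<Rightarrow> bool" where
  "clique_with_pendants a b x y \<longleftrightarrow>
     x \<noteq> y \<and> x \<le> b \<and> y \<le> b \<and> (x < a \<and> y < a \<or> x = 0 \<or> y = 0)"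

lemma simple_graph_clique_with_pendants: "simple_graph {0..b} (clique_with_pendants a b)"
  unfolding simple_graph_def clique_with_pendants_def by auto

lemma clique_with_pendants_universal:
  "v \<in> {0..b} \<Longrightarrow> v \<noteq> 0 \<Longrightarrow> clique_with_pendants a b 0 v"
  by (simp add: clique_with_pendants_def)

lemma connected_clique_with_pendants: "connected_graph {0..b} (clique_with_pendants a b)"
  by (rule universal_vertex_connected[OF simple_graph_clique_with_pendants _
        clique_with_pendants_universal]) simp

lemma clique_with_pendants_no_induced_P3_iff:
  fixes a b :: nat and S :: "nat set"
  defines "G \<equiv> clique_with_pendants a b"
  assumes "0 < a" and "S \<subseteq> {0..b}"
  shows "(\<forall>x\<in>S. \<forall>y\<in>S. \<forall>z\<in>S. G x y \<and> G y z \<and> x \<noteq> z \<longrightarrow> G x z) \<longleftrightarrow>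
      (\<forall>u\<in>S. 0 \<in> S \<and> a \<le> u \<longrightarrow> S \<subseteq> {0, u})"
proof
  assume P3_free: "\<forall>x\<in>S. \<forall>y\<in>S. \<forall>z\<in>S. G x y \<and> G y z \<and> x \<noteq> z \<longrightarrow> G x z"
  show "\<forall>u\<in>S. 0 \<in> S \<and> a \<le> u \<longrightarrow> S \<subseteq> {0, u}"
  proof (intro ballI impI subsetI)
    fix u w assume u: "u \<in> S" "0 \<in> S \<and> a \<le> u" and w: "w \<in> S"
    show "w \<in> {0, u}"
    proof (rule ccontr)
      assume "w \<notin> {0, u}"
      moreover have "u \<le> b" "w \<le> b" using assms(3) u(1) w by auto
      ultimately have "G u 0" "G 0 w" "\<not> G u w"
        using u(2) assms(2) by (auto simp: G_def clique_with_pendants_def)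
      then show False using P3_free u w \<open>w \<notin> {0, u}\<close> by blast
    qed
  qed
next
  assume leaf: "\<forall>u\<in>S. 0 \<in> S \<and> a \<le> u \<longrightarrow> S \<subseteq> {0, u}"
  show "\<forall>x\<in>S. \<forall>y\<in>S. \<forall>z\<in>S. G x y \<and> G y z \<and> x \<noteq> z \<longrightarrow> G x z"
  proof (intro ballI impI)
    fix x y z assume xyz: "x \<in> S" "y \<in> S" "z \<in> S" "G x y \<and> G y z \<and> x \<noteq> z"
    show "G x z"
    proof (cases "y = 0 \<and> (a \<le> x \<or> a \<le> z)")
      case True
      then have "S \<subseteq> {0, x} \<or> S \<subseteq> {0, z}" using leaf xyz(1-3) by blast
      then show ?thesis using xyz unfolding G_def clique_with_pendants_def by auto
    next
      case False
      then show ?thesis using xyz(4) unfolding G_def clique_with_pendants_def by auto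
    qed
  qed
qed

lemma gp_set_clique_with_pendants_iff:
  assumes "0 < a"
  shows "gp_set {0..b} (clique_with_pendants a b) S \<longleftrightarrow>
     S \<subseteq> {0..b} \<and> (\<forall>u\<in>S. 0 \<in> S \<and> a \<le> u \<longrightarrow> S \<subseteq> {0, u})"
proof -
  let ?G = "clique_with_pendants a b"
  have "\<forall>u\<in>{0..b}. \<forall>v\<in>{0..b}. dist {0..b} ?G u v \<le> 2"
    by (rule universal_vertex_diameter_2[OF simple_graph_clique_with_pendants _
          clique_with_pendants_universal]) simp
  then have "gp_set {0..b} ?G S \<longleftrightarrow>
      S \<subseteq> {0..b} \<and> (\<forall>x\<in>S. \<forall>y\<in>S. \<forall>z\<in>S. ?G x y \<and> ?G y z \<and> x \<noteq> z \<longrightarrow> ?G x z)"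
    by (rule gp_set_iff_no_induced_P3[OF simple_graph_clique_with_pendants])
  also have "\<dots> \<longleftrightarrow> S \<subseteq> {0..b} \<and> (\<forall>u\<in>S. 0 \<in> S \<and> a \<le> u \<longrightarrow> S \<subseteq> {0, u})"
    by (rule conj_cong[OF refl]) (rule clique_with_pendants_no_induced_P3_iff[OF assms])
  finally show ?thesis .
qed

lemma card_gp_set_clique_with_pendants_hub:
  assumes "2 \<le> a" and "gp_set {0..b} (clique_with_pendants a b) S" and "0 \<in> S"
  shows "card S \<le> a"
proof (cases "\<exists>u\<in>S. a \<le> u")
  case True
  then obtain u where "u \<in> S" "a \<le> u" by blast
  then have "S \<subseteq> {0, u}"
    using assms gp_set_clique_with_pendants_iff[of a b S] by auto
  then have "card S \<le> card {0, u}" by (intro card_mono) auto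
  also have "\<dots> \<le> 2" by (simp add: card_insert_if)
  finally show ?thesis using assms(1) by simp
next
  case False
  then have "S \<subseteq> {..<a}" by auto
  then show ?thesis using card_mono[of "{..<a}" S] by simp
qed

lemma gp_clique_with_pendants:
  assumes "2 \<le> a" and "a \<le> b"
  shows "gp {0..b} (clique_with_pendants a b) = b"
  unfolding gp_def
proof (rule Max_cards_eqI[where S\<^sub>0 = "{1..b}"])
  fix S assume gp: "gp_set {0..b} (clique_with_pendants a b) S"
  show "card S \<le> b"
  proof (cases "0 \<in> S")
    case True
    then show ?thesis using card_gp_set_clique_with_pendants_hub[OF assms(1) gp] assms(2) by simp
  next
    case False
    have "S \<subseteq> {0..b}" using gp by (simp add: gp_set_def)
    then have "S \<subseteq> {1..b}" using False by (fastforce simp: Suc_le_eq intro: gr0I)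
    then show ?thesis using card_mono[of "{1..b}" S] by simp
  qed
next
  show "gp_set {0..b} (clique_with_pendants a b) {1..b}"
    using assms(1) by (simp add: gp_set_clique_with_pendants_iff)
qed simp

lemma mob_clique_with_pendants:
  assumes "2 \<le> a" and "a \<le> b"
  shows "mob {0..b} (clique_with_pendants a b) = a"
  unfolding mob_def
proof (rule Max_cards_eqI[where S\<^sub>0 = "{..<a}"])
  fix S assume "mobile_gp_set {0..b} (clique_with_pendants a b) S"
  \<comment> \<open>some configuration occupies the hub \<open>0\<close>\<close>
  then obtain C where "gp_set {0..b} (clique_with_pendants a b) C" "card C = card S" "0 \<in> C"
    using mobile_gp_set_covers[of "{0..b}"] by fastforce
  then show "card S \<le> a" using card_gp_set_clique_with_pendants_hub[OF assms(1)] by metis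
next
  let ?G = "clique_with_pendants a b"
  have gp_clique: "gp_set {0..b} ?G {..<a}"
    using assms by (auto simp: gp_set_clique_with_pendants_iff)
  show "mobile_gp_set {0..b} ?G {..<a}"
  proof (rule mobile_gp_set_if_reachable[OF simple_graph_clique_with_pendants gp_clique])
    fix w assume w: "w \<in> {0..b}"
    show "\<exists>C. (gp_move {0..b} ?G)\<^sup>*\<^sup>* {..<a} C \<and> w \<in> C"
    proof (cases "w < a")
      case True
      then show ?thesis by blast
    next
      case False
      let ?C = "insert w ({..<a} - {0})"
      have "gp_set {0..b} ?G ?C"
        using assms w by (auto simp: gp_set_clique_with_pendants_iff)
      then have "legal_move {0..b} ?G {..<a} ?C"
        unfolding legal_move_def using assms w False
        by (intro exI[of _ 0] exI[of _ w]) (auto simp: clique_with_pendants_def)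
      then have "(gp_move {0..b} ?G)\<^sup>*\<^sup>* {..<a} ?C"
        using gp_clique by (simp add: gp_move_def r_into_rtranclp)
      then show ?thesis by blast
    qed
  qed
qed simp

theorem lemma1p1:
  shows "(\<forall>(V :: 'a set) E. simple_graph V E \<and> connected_graph V E \<and> card V \<ge> 2 \<longrightarrow>
            2 \<le> mob V E \<and> mob V E \<le> gp V E)
       \<and> (\<forall>a b :: nat. 2 \<le> a \<and> a \<le> b \<longrightarrow>
            (\<exists>(V :: nat set) E. simple_graph V E \<and> connected_graph V E \<and>
               mob V E = a \<and> gp V E = b))"
proof (rule conjI; intro allI impI)
  fix V :: "'a set" and E
  assume "simple_graph V E \<and> connected_graph V E \<and> card V \<ge> 2"
  then show "2 \<le> mob V E \<and> mob V E \<le> gp V E" using two_le_mob_le_gp by blast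
next
  fix a b :: nat
  assume "2 \<le> a \<and> a \<le> b"
  then show "\<exists>(V :: nat set) E. simple_graph V E \<and> connected_graph V E \<and> mob V E = a \<and> gp V E = b"
    using simple_graph_clique_with_pendants connected_clique_with_pendants
      mob_clique_with_pendants gp_clique_with_pendants by blast
qed

end
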